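(* Let $p>1$ and let $f:\mathbb{N}\to\mathbb{R}_{\geq 0}$ be a concave function with property $(C_p)$. Then there exists a constant $C$ (depending only on $f$ and $p$) such that for every finite subset $M=\{m_1,m_2,\dots,m_{2k}\}$ of $\mathbb{N}$ with $m_i<m_{i+1}$ for all $i$ and $m_1\geq 1$, \[ \sum_{i=1}^k \left(\frac{f(m_{2i})}{m_{2i}}\right)^p\frac{m_{2i}-m_{2i-1}}{m_{2i}} \leq C. \] Moreover, if in addition $m_{2i}\leq 2m_{2i-1}$ for each $i$, then \[ \sum_{i=1}^k \left(\frac{f(m_{2i-1})}{m_{2i-1}}\right)^p\frac{m_{2i}-m_{2i-1}}{m_{2i-1}} \leq 2^{p+1}C. \]
   Context: A function $f:\mathbb{N}\to\mathbb{R}_{\geq 0}$ is called concave if $f$ is non-decreasing and for all $m,n\in\mathbb{N}$ with $n\geq m$ one has $f(n+m)-f(n)\leq f(n)-f(n-m)$. Such an $f$ has property $(C_p)$ if $\sum_{n=1}^\infty \frac{1}{n}\left(\frac{f(n)}{n}\right)^p<\infty$. *)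

theory Defs
  imports Complex_Main
begin

text \<open>Concave function f : N -> R_{>=0} (here N includes 0, since the concavity
condition with n = m refers to f 0).\<close>
definition concave_fun :: "(nat \<Rightarrow> real) \<Rightarrow> bool" where
  "concave_fun f \<longleftrightarrow> (\<forall>n. f n \<ge> 0) \<and> mono f \<and>
     (\<forall>m n. n \<ge> m \<longrightarrow> f (n + m) - f n \<le> f n - f (n - m))"

definition prop_C :: "real \<Rightarrow> (nat \<Rightarrow> real) \<Rightarrow> bool" where
  "prop_C p f \<longleftrightarrow> summable (\<lambda>n. (1 / real (Suc n)) * (f (Suc n) / real (Suc n)) powr p)"

end

theory Submission
  imports Defs
begin

text \<open>Concavity makes the increments of \<open>f\<close> decrease, so \<open>f(n)/n\<close> (the average of the
first \<open>n\<close> increments, plus \<open>f(0)/n \<ge> 0\<close>) is non-increasing. Hence each term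
\<open>(f(b)/b)^p (b - a)/b\<close> is dominated by the block \<open>a \<le> j < b\<close> of the series in \<open>(C_p)\<close>, and for
the disjoint blocks \<open>[m(2i-1), m(2i))\<close> these add up to at most the sum \<open>C\<close> of that series.
When \<open>b \<le> 2a\<close>, monotonicity of \<open>f\<close> gives \<open>f(a)/a \<le> 2 f(b)/b\<close> and \<open>1/a \<le> 2/b\<close>, whence the
factor \<open>2^(p+1)\<close>.\<close>

definition prop_C_term :: "real \<Rightarrow> (nat \<Rightarrow> real) \<Rightarrow> nat \<Rightarrow> real" where
  "prop_C_term p f j = (1 / real (Suc j)) * (f (Suc j) / real (Suc j)) powr p"

lemma prop_C_iff_summable_term: "prop_C p f \<longleftrightarrow> summable (prop_C_term p f)"
  by (simp add: prop_C_def prop_C_term_def [abs_def])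

lemma prop_C_term_nonneg: "0 \<le> prop_C_term p f j"
  by (simp add: prop_C_term_def)

lemma concave_fun_nonneg: "concave_fun f \<Longrightarrow> 0 \<le> f n"
  by (simp add: concave_fun_def)

lemma concave_fun_mono: "concave_fun f \<Longrightarrow> mono f"
  by (simp add: concave_fun_def)

lemma concave_fun_increments_decseq:
  assumes "concave_fun f"
  shows "decseq (\<lambda>n. f (Suc n) - f n)"
proof (rule decseq_SucI)
  fix n
  have "\<forall>m n. m \<le> n \<longrightarrow> f (n + m) - f n \<le> f n - f (n - m)"
    using assms by (simp add: concave_fun_def)
  from this [rule_format, of 1 "Suc n"] show "f (Suc (Suc n)) - f (Suc n) \<le> f (Suc n) - f n"
    by simp
qed

lemma concave_fun_ratio_decseq:
  assumes "concave_fun f"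
  shows "decseq (\<lambda>n. f (Suc n) / real (Suc n))"
proof (rule decseq_SucI)
  fix n
  let ?k = "Suc n"
  have "real ?k * (f (Suc ?k) - f ?k) = (\<Sum>j<?k. f (Suc ?k) - f ?k)"
    by simp
  also have "\<dots> \<le> (\<Sum>j<?k. f (Suc j) - f j)"
    using decseqD [OF concave_fun_increments_decseq [OF assms]] by (intro sum_mono) simp
  also have "\<dots> = f ?k - f 0"
    by (rule sum_lessThan_telescope)
  also have "\<dots> \<le> f ?k"
    using concave_fun_nonneg [OF assms] by simp
  finally have "real ?k * f (Suc ?k) \<le> real (Suc ?k) * f ?k"
    by (simp add: algebra_simps)
  then show "f (Suc ?k) / real (Suc ?k) \<le> f ?k / real ?k"
    by (simp add: field_simps del: of_nat_Suc)
qed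

lemma concave_fun_ratio_antimono:
  assumes "concave_fun f" "1 \<le> n" "n \<le> n'"
  shows "f n' / real n' \<le> f n / real n"
proof -
  have "n - 1 \<le> n' - 1"
    using assms(3) by simp
  from decseqD [OF concave_fun_ratio_decseq [OF assms(1)] this] show ?thesis
    using assms(2,3) by simp
qed

lemma concave_fun_term_le_prop_C_sum:
  assumes "concave_fun f" "0 \<le> p" "a < b"
  shows "(f b / real b) powr p * (real b - real a) / real b \<le> (\<Sum>j\<in>{a..<b}. prop_C_term p f j)"
proof -
  have "(f b / real b) powr p / real b \<le> prop_C_term p f j" if "j \<in> {a..<b}" for j
  proof -
    have "(f b / real b) powr p \<le> (f (Suc j) / real (Suc j)) powr p"
      using that concave_fun_ratio_antimono [OF assms(1), of "Suc j" b]
      by (intro powr_mono2 assms(2) divide_nonneg_nonneg concave_fun_nonneg [OF assms(1)]) simp_all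
    moreover have "real (Suc j) \<le> real b"
      using that by simp
    ultimately show ?thesis
      unfolding prop_C_term_def
      by (simp add: frac_le)
  qed
  then have "(\<Sum>j\<in>{a..<b}. (f b / real b) powr p / real b) \<le> (\<Sum>j\<in>{a..<b}. prop_C_term p f j)"
    by (rule sum_mono)
  moreover have "real (b - a) = real b - real a"
    using assms(3) by simp
  ultimately show ?thesis
    by (simp add: ac_simps)
qed

lemma sum_interval_blocks_le_sum_lessThan:
  fixes g :: "nat \<Rightarrow> real"
  assumes "\<And>j. 0 \<le> g j" "1 \<le> k" "\<forall>i. 1 \<le> i \<and> i < 2 * k \<longrightarrow> m i < m (Suc i)"
  shows "(\<Sum>i=1..k. sum g {m (2*i - 1)..<m (2*i)}) \<le> sum g {..<m (2*k)}"
  using assms(2,3)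
proof (induction k rule: nat_induct_at_least)
  case base
  have "sum g {m 1..<m 2} \<le> sum g {..<m 2}"
    using assms(1) by (intro sum_mono2) auto
  then show ?case
    by simp
next
  case (Suc k)
  let ?a = "m (Suc (2*k))" and ?b = "m (Suc (Suc (2*k)))"
  have "m (2*k) < ?a" "?a < ?b"
    using Suc.prems Suc.hyps(1) by auto
  have "(\<Sum>i=1..Suc k. sum g {m (2*i - 1)..<m (2*i)})
      = (\<Sum>i=1..k. sum g {m (2*i - 1)..<m (2*i)}) + sum g {?a..<?b}"
    by simp
  also have "\<dots> \<le> sum g {..<m (2*k)} + sum g {?a..<?b}"
    using Suc by simp
  also have "\<dots> \<le> sum g {..<?a} + sum g {?a..<?b}"
    using \<open>m (2*k) < ?a\<close> assms(1) by (simp add: sum_mono2)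
  also have "\<dots> = sum g {..<?b}"
    using sum.atLeastLessThan_concat [of 0 ?a ?b g] \<open>?a < ?b\<close>
    by (simp add: lessThan_atLeast0)
  finally show ?case
    by simp
qed

lemma interval_block_less:
  assumes "\<forall>i. 1 \<le> i \<and> i < 2 * k \<longrightarrow> m i < m (Suc i)" "i \<in> {1..k}"
  shows "m (2*i - 1) < m (2*i)"
proof -
  have "1 \<le> 2*i - 1 \<and> 2*i - 1 < 2*k" "Suc (2*i - 1) = 2*i"
    using assms(2) by auto
  then show ?thesis
    using assms(1) by metis
qed

lemma concave_fun_term_sum_le_suminf:
  assumes "concave_fun f" "0 \<le> p" "summable (prop_C_term p f)"
    and "\<forall>i. 1 \<le> i \<and> i < 2 * k \<longrightarrow> m i < m (Suc i)"
  shows "(\<Sum>i=1..k. (f (m (2*i)) / real (m (2*i))) powr p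
           * (real (m (2*i)) - real (m (2*i - 1))) / real (m (2*i)))
         \<le> suminf (prop_C_term p f)"
proof (cases "k = 0")
  case True
  then show ?thesis
    using assms(3) by (simp add: suminf_nonneg prop_C_term_nonneg)
next
  case False
  have "(\<Sum>i=1..k. (f (m (2*i)) / real (m (2*i))) powr p
           * (real (m (2*i)) - real (m (2*i - 1))) / real (m (2*i)))
        \<le> (\<Sum>i=1..k. sum (prop_C_term p f) {m (2*i - 1)..<m (2*i)})"
    by (intro sum_mono concave_fun_term_le_prop_C_sum [OF assms(1,2)] interval_block_less [OF assms(4)])
  also have "\<dots> \<le> sum (prop_C_term p f) {..<m (2*k)}"
    using False assms(4) by (intro sum_interval_blocks_le_sum_lessThan prop_C_term_nonneg) simp_all
  also have "\<dots> \<le> suminf (prop_C_term p f)"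
    using assms(3) by (intro sum_le_suminf prop_C_term_nonneg) simp_all
  finally show ?thesis .
qed

lemma mono_term_le_doubling:
  fixes f :: "nat \<Rightarrow> real"
  assumes "mono f" "\<And>n. 0 \<le> f n" "0 \<le> p" "a < b" "b \<le> 2 * a"
  shows "(f a / real a) powr p * (real b - real a) / real a
         \<le> 2 powr (p + 1) * ((f b / real b) powr p * (real b - real a) / real b)"
proof -
  have a_pos: "0 < real a"
    using assms(4,5) by linarith
  have inverse_le: "1 / real a \<le> 2 / real b"
    using a_pos assms(4,5) by (simp add: field_simps)
  have "f a / real a \<le> f b / real a"
    using assms(1,4) a_pos by (simp add: monoD divide_right_mono)
  also have "\<dots> \<le> f b * (2 / real b)"
    using mult_left_mono [OF inverse_le assms(2) [of b]] by simp
  finally have "f a / real a \<le> 2 * (f b / real b)"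
    by (simp add: mult.commute)
  then have "(f a / real a) powr p \<le> 2 powr p * (f b / real b) powr p"
    using assms(2,3) by (simp add: powr_mono2 powr_mult [symmetric])
  moreover have "(real b - real a) / real a \<le> 2 * ((real b - real a) / real b)"
    using mult_left_mono [OF inverse_le, of "real b - real a"] assms(4) by (simp add: mult_ac)
  ultimately have "(f a / real a) powr p * ((real b - real a) / real a)
      \<le> (2 powr p * (f b / real b) powr p) * (2 * ((real b - real a) / real b))"
    using assms(4) by (intro mult_mono) simp_all
  then show ?thesis
    by (simp add: powr_add algebra_simps)
qed

theorem lemma2p3:
  fixes p :: real and f :: "nat \<Rightarrow> real"
  assumes "p > 1" and "concave_fun f" and "prop_C p f"
  shows "\<exists>C::real.
    (\<forall>(k::nat) (m::nat \<Rightarrow> nat).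
       (\<forall>i. 1 \<le> i \<and> i < 2 * k \<longrightarrow> m i < m (Suc i)) \<and> m 1 \<ge> 1 \<longrightarrow>
       (\<Sum>i=1..k. (f (m (2*i)) / real (m (2*i))) powr p
                   * (real (m (2*i)) - real (m (2*i - 1))) / real (m (2*i))) \<le> C) \<and>
    (\<forall>(k::nat) (m::nat \<Rightarrow> nat).
       (\<forall>i. 1 \<le> i \<and> i < 2 * k \<longrightarrow> m i < m (Suc i)) \<and> m 1 \<ge> 1 \<and>
       (\<forall>i\<in>{1..k}. m (2*i) \<le> 2 * m (2*i - 1)) \<longrightarrow>
       (\<Sum>i=1..k. (f (m (2*i - 1)) / real (m (2*i - 1))) powr p
                   * (real (m (2*i)) - real (m (2*i - 1))) / real (m (2*i - 1)))
         \<le> 2 powr (p + 1) * C)"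
proof (intro exI conjI allI impI; elim conjE)
  let ?C = "suminf (prop_C_term p f)"
  have p_nonneg: "0 \<le> p" and summable: "summable (prop_C_term p f)"
    using assms(1,3) by (simp_all add: prop_C_iff_summable_term)
  note right_sum_le = concave_fun_term_sum_le_suminf [OF assms(2) p_nonneg summable]
  fix k :: nat and m :: "nat \<Rightarrow> nat"
  assume increasing: "\<forall>i. 1 \<le> i \<and> i < 2 * k \<longrightarrow> m i < m (Suc i)"
  then show "(\<Sum>i=1..k. (f (m (2*i)) / real (m (2*i))) powr p
                   * (real (m (2*i)) - real (m (2*i - 1))) / real (m (2*i))) \<le> ?C"
    by (rule right_sum_le)
  assume doubling: "\<forall>i\<in>{1..k}. m (2*i) \<le> 2 * m (2*i - 1)"
  have "(\<Sum>i=1..k. (f (m (2*i - 1)) / real (m (2*i - 1))) powr p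
                   * (real (m (2*i)) - real (m (2*i - 1))) / real (m (2*i - 1)))
      \<le> (\<Sum>i=1..k. 2 powr (p + 1) * ((f (m (2*i)) / real (m (2*i))) powr p
                   * (real (m (2*i)) - real (m (2*i - 1))) / real (m (2*i))))"
    using doubling
    by (intro sum_mono mono_term_le_doubling [OF concave_fun_mono [OF assms(2)]
        concave_fun_nonneg [OF assms(2)] p_nonneg] interval_block_less [OF increasing]) auto
  also have "\<dots> \<le> 2 powr (p + 1) * ?C"
    using mult_left_mono [OF right_sum_le [OF increasing], of "2 powr (p + 1)"]
    by (simp add: sum_distrib_left)
  finally show "(\<Sum>i=1..k. (f (m (2*i - 1)) / real (m (2*i - 1))) powr p
                   * (real (m (2*i)) - real (m (2*i - 1))) / real (m (2*i - 1)))
      \<le> 2 powr (p + 1) * ?C" .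
qed

end
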